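(* The Vietoris functor $\mathbb{V}\colon \mathbf{CH}\to\mathbf{CH}$ preserves coreflexive equalizers: if $f,g\colon X\to Y$ are morphisms in $\mathbf{CH}$ having a common retraction $k\colon Y\to X$ (i.e. $k\circ f=k\circ g=1_X$) and $h\colon E\to X$ is an equalizer of $f$ and $g$ in $\mathbf{CH}$, then $\mathbb{V}h$ is an equalizer of $\mathbb{V}f$ and $\mathbb{V}g$ in $\mathbf{CH}$.
   Context: $\mathbf{CH}$ denotes the category of compact Hausdorff spaces and continuous maps. For a compact Hausdorff space $X$, $\mathbb{V}X$ is the set of all closed subsets of $X$ (including $\varnothing$) with the Vietoris topology, generated by the sets $\Box U=\{K\in\mathbb{V}X\mid K\subseteq U\}$ and $\Diamond U=\{K\in\mathbb{V}X\mid K\cap U\neq\varnothing\}$ for $U$ open in $X$; it is a compact Hausdorff space. For a continuous $f\colon X\to Y$, $\mathbb{V}f\colon\mathbb{V}X\to\mathbb{V}Y$ is $K\mapsto f[K]$. *)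

theory Defs
  imports "HOL-Analysis.Analysis"
begin

definition CH :: "'a topology \<Rightarrow> bool" where
  "CH X \<longleftrightarrow> compact_space X \<and> Hausdorff_space X"

text \<open>Vietoris hyperspace: all closed subsets (including the empty set),
  topology generated by the sets Box U and Diamond U for U open.\<close>
definition vietoris :: "'a topology \<Rightarrow> 'a set topology" where
  "vietoris X = topology_generated_by
     ({{K. closedin X K \<and> K \<subseteq> U} | U. openin X U} \<union>
      {{K. closedin X K \<and> K \<inter> U \<noteq> {}} | U. openin X U})"

definition vmap :: "('a \<Rightarrow> 'b) \<Rightarrow> 'a set \<Rightarrow> 'b set" where
  "vmap f K = f ` K"

text \<open>h : E \<rightarrow> X is an equalizer of f, g : X \<rightarrow> Y in CH.  Morphisms are
  continuous maps, identified when they agree on the carrier.  Test objects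
  Z range over compact Hausdorff spaces whose points live in the type 'z
  (the type is a parameter, as HOL cannot quantify over types in a formula).\<close>
definition is_equalizer_CH ::
  "'z itself \<Rightarrow> 'e topology \<Rightarrow> 'x topology \<Rightarrow> ('x \<Rightarrow> 'y) \<Rightarrow> ('x \<Rightarrow> 'y) \<Rightarrow> ('e \<Rightarrow> 'x) \<Rightarrow> bool"
where
  "is_equalizer_CH (_::'z itself) E X f g h \<longleftrightarrow>
     CH E \<and> continuous_map E X h \<and> (\<forall>e\<in>topspace E. f (h e) = g (h e)) \<and>
     (\<forall>(Z::'z topology) z. CH Z \<and> continuous_map Z X z \<and> (\<forall>t\<in>topspace Z. f (z t) = g (z t))
        \<longrightarrow> (\<exists>u. continuous_map Z E u \<and> (\<forall>t\<in>topspace Z. h (u t) = z t)) \<and>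
            (\<forall>u u'. continuous_map Z E u \<and> continuous_map Z E u' \<and>
                    (\<forall>t\<in>topspace Z. h (u t) = z t) \<and> (\<forall>t\<in>topspace Z. h (u' t) = z t)
                    \<longrightarrow> (\<forall>t\<in>topspace Z. u t = u' t)))"

end

theory Submission
  imports Defs
begin

text \<open>
  In CH an equalizer of \<open>f, g\<close> is a continuous injection onto \<open>{x. f x = g x}\<close> (test against
  the one-point space), and conversely every such injection of a compact space is an
  equalizer, being an embedding into a Hausdorff space.  The Vietoris functor preserves
  compact Hausdorff spaces, continuous closed maps and injectivity, so \<open>\<V>h\<close> is a continuous
  injection onto the closed sets contained in \<open>{x. f x = g x}\<close>.  The common retraction \<open>k\<close>
  shows these are exactly the closed \<open>K\<close> with \<open>f[K] = g[K]\<close>: from \<open>f x = g x'\<close> we get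
  \<open>x = k (f x) = k (g x') = x'\<close>.
\<close>

definition Vbox :: "'a topology \<Rightarrow> 'a set \<Rightarrow> 'a set set" where
  "Vbox X U = {K. closedin X K \<and> K \<subseteq> U}"

definition Vdiamond :: "'a topology \<Rightarrow> 'a set \<Rightarrow> 'a set set" where
  "Vdiamond X U = {K. closedin X K \<and> K \<inter> U \<noteq> {}}"

lemma vietoris_eq:
  "vietoris X = topology_generated_by ({Vbox X U | U. openin X U} \<union> {Vdiamond X U | U. openin X U})"
  by (simp add: vietoris_def Vbox_def Vdiamond_def)

lemma topspace_vietoris: "topspace (vietoris X) = {K. closedin X K}"
proof -
  have "\<And>K. closedin X K \<Longrightarrow> K \<in> Vbox X (topspace X)"
    by (simp add: Vbox_def closedin_subset)
  then show ?thesis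
    unfolding vietoris_eq topology_generated_by_topspace
    by (auto simp: Vbox_def Vdiamond_def)
qed

lemma openin_vietoris_Vbox: "openin X U \<Longrightarrow> openin (vietoris X) (Vbox X U)"
  unfolding vietoris_eq by (rule topology_generated_by_Basis) blast

lemma openin_vietoris_Vdiamond: "openin X U \<Longrightarrow> openin (vietoris X) (Vdiamond X U)"
  unfolding vietoris_eq by (rule topology_generated_by_Basis) blast

lemma continuous_map_into_vietoris:
  assumes closed: "\<And>t. t \<in> topspace Z \<Longrightarrow> closedin X (u t)"
    and box: "\<And>U. openin X U \<Longrightarrow> openin Z {t \<in> topspace Z. u t \<subseteq> U}"
    and diamond: "\<And>U. openin X U \<Longrightarrow> openin Z {t \<in> topspace Z. u t \<inter> U \<noteq> {}}"
  shows "continuous_map Z (vietoris X) u"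
  unfolding vietoris_eq
proof (rule continuous_on_generated_topo)
  fix W assume "W \<in> {Vbox X U | U. openin X U} \<union> {Vdiamond X U | U. openin X U}"
  then obtain U where U: "openin X U" and "W = Vbox X U \<or> W = Vdiamond X U" by blast
  then show "openin Z (u -` W \<inter> topspace Z)"
  proof (elim disjE)
    assume "W = Vbox X U"
    then have "u -` W \<inter> topspace Z = {t \<in> topspace Z. u t \<subseteq> U}"
      using closed by (auto simp: Vbox_def)
    then show ?thesis using box U by simp
  next
    assume "W = Vdiamond X U"
    then have "u -` W \<inter> topspace Z = {t \<in> topspace Z. u t \<inter> U \<noteq> {}}"
      using closed by (auto simp: Vdiamond_def)
    then show ?thesis using diamond U by simp
  qed
next
  show "u ` topspace Z \<subseteq> \<Union> ({Vbox X U | U. openin X U} \<union> {Vdiamond X U | U. openin X U})"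
    using closed topspace_vietoris[of X] by (auto simp: vietoris_eq)
qed

lemma Hausdorff_space_vietoris:
  assumes "compact_space X" "Hausdorff_space X"
  shows "Hausdorff_space (vietoris X)"
proof -
  have regular: "regular_space X"
    using assms compact_Hausdorff_imp_regular_space by blast
  have separate: "\<exists>U V. openin (vietoris X) U \<and> openin (vietoris X) V \<and> A \<in> U \<and> B \<in> V \<and> disjnt U V"
    if A: "closedin X A" and B: "closedin X B" and x: "x \<in> A" "x \<notin> B" for A B x
  proof -
    have "x \<in> topspace X - B"
      using A x closedin_subset by blast
    then obtain U V where UV: "openin X U" "openin X V" "x \<in> U" "B \<subseteq> V" "disjnt U V"
      using regular[unfolded regular_space_def, rule_format, OF conjI[OF B]] by blast
    have "A \<in> Vdiamond X U" "B \<in> Vbox X V"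
      using A B x UV by (auto simp: Vbox_def Vdiamond_def)
    moreover have "disjnt (Vdiamond X U) (Vbox X V)"
      using UV(5) by (auto simp: Vbox_def Vdiamond_def disjnt_def)
    ultimately show ?thesis
      using openin_vietoris_Vdiamond[OF UV(1)] openin_vietoris_Vbox[OF UV(2)] by blast
  qed
  show ?thesis
    unfolding Hausdorff_space_def topspace_vietoris
  proof (intro allI impI, elim conjE)
    fix A B assume "A \<in> Collect (closedin X)" "B \<in> Collect (closedin X)" "A \<noteq> B"
    then have closed: "closedin X A" "closedin X B" and "\<not> A \<subseteq> B \<or> \<not> B \<subseteq> A"
      by auto
    then consider x where "x \<in> A" "x \<notin> B" | x where "x \<in> B" "x \<notin> A"
      by blast
    then show "\<exists>U V. openin (vietoris X) U \<and> openin (vietoris X) V \<and> A \<in> U \<and> B \<in> V \<and> disjnt U V"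
    proof cases
      case (1 x)
      then show ?thesis using separate[OF closed] by blast
    next
      case (2 x)
      then show ?thesis using separate[OF closed(2,1)] disjnt_sym by metis
    qed
  qed
qed

lemma topology_generated_by_eq_subbase:
  "topology (arbitrary union_of (finite intersection_of (\<lambda>x. x \<in> S) relative_to \<Union>S))
   = topology_generated_by S"
proof (rule topology_eq[THEN iffD2], intro allI iffI)
  fix A
  assume "openin (topology (arbitrary union_of (finite intersection_of (\<lambda>x. x \<in> S) relative_to \<Union>S))) A"
  then show "openin (topology_generated_by S) A"
    by (rule minimal_topology_subbase[where X="topology_generated_by S", rotated 2])
       (auto simp: topology_generated_by_Basis)
next
  fix A
  assume "openin (topology_generated_by S) A"
  then have "generate_topology_on S A"
    by (rule openin_topology_generated_by)
  then show "openin (topology (arbitrary union_of (finite intersection_of (\<lambda>x. x \<in> S) relative_to \<Union>S))) A"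
  proof induction
    case (Basis s)
    then show ?case
      by (simp add: arbitrary_union_of_inc finite_intersection_of_inc openin_subbase
          relative_to_subset_inc Sup_upper)
  qed auto
qed

lemma compact_space_topology_generated_by:
  assumes "\<And>C. \<lbrakk>C \<subseteq> S; \<Union>C = \<Union>S\<rbrakk> \<Longrightarrow> \<exists>C'. finite C' \<and> C' \<subseteq> C \<and> \<Union>C' = \<Union>S"
  shows "compact_space (topology_generated_by S)"
  by (rule Alexander_subbase[where \<B>=S]) (use topology_generated_by_eq_subbase assms in auto)

lemma closedin_covered_by_Vbox_Vdiamonds:
  assumes "compact_space X" "openin X U0" "\<forall>U\<in>J. openin X U" "topspace X - U0 \<subseteq> \<Union>J"
  obtains J' where "finite J'" "J' \<subseteq> J" "Collect (closedin X) \<subseteq> Vbox X U0 \<union> \<Union>(Vdiamond X ` J')"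
proof -
  have "compactin X (topspace X - U0)"
    using assms(1,2) by (simp add: closedin_compact_space closedin_diff)
  then have "\<exists>J'. finite J' \<and> J' \<subseteq> J \<and> topspace X - U0 \<subseteq> \<Union>J'"
    using assms(3,4) unfolding compactin_def by blast
  then obtain J' where J': "finite J'" "J' \<subseteq> J" "topspace X - U0 \<subseteq> \<Union>J'"
    by blast
  have "K \<in> Vbox X U0 \<union> \<Union>(Vdiamond X ` J')" if K: "closedin X K" for K
  proof (cases "K \<subseteq> U0")
    case True
    then show ?thesis using K by (simp add: Vbox_def)
  next
    case False
    then obtain x V where "x \<in> K" "V \<in> J'" "x \<in> V"
      using J'(3) K closedin_subset by blast
    then show ?thesis
      using K by (auto simp: Vdiamond_def)
  qed
  with J' show thesis
    using that by blast
qed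

lemma compact_space_vietoris:
  assumes "compact_space X"
  shows "compact_space (vietoris X)"
  unfolding vietoris_eq
proof (rule compact_space_topology_generated_by)
  define S where "S = {Vbox X U | U. openin X U} \<union> {Vdiamond X U | U. openin X U}"
  fix C assume C: "C \<subseteq> S" and cover: "\<Union>C = \<Union>S"
  have S_closed: "\<Union>S = {K. closedin X K}"
    using topspace_vietoris[of X] by (simp add: S_def vietoris_eq)
  define J where "J = {U. openin X U \<and> Vdiamond X U \<in> C}"
  \<comment> \<open>The closed set missed by all diamonds of the cover must lie in one of its boxes.\<close>
  have "closedin X (topspace X - \<Union>J)"
    by (auto simp: J_def)
  moreover have "\<Union>C = {K. closedin X K}"
    using cover S_closed by simp
  ultimately obtain c where c: "c \<in> C" "topspace X - \<Union>J \<in> c"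
    by blast
  then obtain U0 where U0: "openin X U0" "c = Vbox X U0 \<or> c = Vdiamond X U0"
    using C by (auto simp: S_def)
  have "c \<noteq> Vdiamond X U0"
    using c U0(1) by (auto simp: J_def Vdiamond_def)
  then have c_box: "c = Vbox X U0"
    using U0 by blast
  then have "topspace X - U0 \<subseteq> \<Union>J"
    using c by (auto simp: Vbox_def)
  moreover have "\<forall>U\<in>J. openin X U"
    by (simp add: J_def)
  ultimately obtain J' where J': "finite J'" "J' \<subseteq> J"
      and covers: "Collect (closedin X) \<subseteq> Vbox X U0 \<union> \<Union>(Vdiamond X ` J')"
    by (metis closedin_covered_by_Vbox_Vdiamonds[OF assms U0(1)])
  define C' where "C' = insert c (Vdiamond X ` J')"
  have "C' \<subseteq> C"
    using J' c by (auto simp: C'_def J_def)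
  moreover have "\<Union>C' = \<Union>S"
  proof
    show "\<Union>C' \<subseteq> \<Union>S"
      using Union_mono[OF \<open>C' \<subseteq> C\<close>] cover by simp
    show "\<Union>S \<subseteq> \<Union>C'"
      using covers by (simp add: S_closed C'_def c_box)
  qed
  moreover have "finite C'"
    using J'(1) by (simp add: C'_def)
  ultimately show "\<exists>C'. finite C' \<and> C' \<subseteq> C \<and> \<Union>C' = \<Union>S"
    by blast
qed

lemma CH_vietoris: "CH X \<Longrightarrow> CH (vietoris X)"
  unfolding CH_def using compact_space_vietoris Hausdorff_space_vietoris by blast

lemma continuous_map_vmap:
  assumes cont: "continuous_map X Y f" and closed: "closed_map X Y f"
  shows "continuous_map (vietoris X) (vietoris Y) (vmap f)"
proof (rule continuous_map_into_vietoris)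
  fix K assume "K \<in> topspace (vietoris X)"
  then show "closedin Y (vmap f K)"
    using closed by (simp add: topspace_vietoris vmap_def closed_map_def)
next
  fix U assume U: "openin Y U"
  have "{K \<in> topspace (vietoris X). vmap f K \<subseteq> U} = Vbox X {x \<in> topspace X. f x \<in> U}"
    using closedin_subset by (fastforce simp: topspace_vietoris vmap_def Vbox_def)
  then show "openin (vietoris X) {K \<in> topspace (vietoris X). vmap f K \<subseteq> U}"
    using openin_vietoris_Vbox openin_continuous_map_preimage[OF cont U] by metis
next
  fix U assume U: "openin Y U"
  have "{K \<in> topspace (vietoris X). vmap f K \<inter> U \<noteq> {}} = Vdiamond X {x \<in> topspace X. f x \<in> U}"
    using closedin_subset by (fastforce simp: topspace_vietoris vmap_def Vdiamond_def)
  then show "openin (vietoris X) {K \<in> topspace (vietoris X). vmap f K \<inter> U \<noteq> {}}"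
    using openin_vietoris_Vdiamond openin_continuous_map_preimage[OF cont U] by metis
qed

lemma inj_on_vmap:
  assumes "inj_on f (topspace X)"
  shows "inj_on (vmap f) (topspace (vietoris X))"
proof (rule inj_onI)
  fix K L assume "K \<in> topspace (vietoris X)" "L \<in> topspace (vietoris X)" "vmap f K = vmap f L"
  then show "K = L"
    using inj_on_image_eq_iff[OF assms] closedin_subset by (metis mem_Collect_eq topspace_vietoris vmap_def)
qed

lemma vmap_image_topspace_vietoris:
  assumes cont: "continuous_map X Y f" and closed: "closed_map X Y f"
  shows "vmap f ` topspace (vietoris X) = {K. closedin Y K \<and> K \<subseteq> f ` topspace X}"
proof (intro equalityI subsetI)
  fix L assume "L \<in> vmap f ` topspace (vietoris X)"
  then show "L \<in> {K. closedin Y K \<and> K \<subseteq> f ` topspace X}"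
    using closed closedin_subset by (force simp: topspace_vietoris vmap_def closed_map_def)
next
  fix L assume L: "L \<in> {K. closedin Y K \<and> K \<subseteq> f ` topspace X}"
  then have "L = vmap f {x \<in> topspace X. f x \<in> L}"
    by (auto simp: vmap_def)
  moreover have "closedin X {x \<in> topspace X. f x \<in> L}"
    using L closedin_continuous_map_preimage[OF cont] by blast
  ultimately show "L \<in> vmap f ` topspace (vietoris X)"
    by (auto simp: topspace_vietoris)
qed

lemma image_eq_iff_subset_equalizer_if_common_retraction:
  assumes "\<forall>x\<in>S. k (f x) = x" "\<forall>x\<in>S. k (g x) = x" "K \<subseteq> S"
  shows "f ` K = g ` K \<longleftrightarrow> K \<subseteq> {x \<in> S. f x = g x}"
proof
  assume eq: "f ` K = g ` K"
  show "K \<subseteq> {x \<in> S. f x = g x}"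
  proof
    fix x assume "x \<in> K"
    then obtain x' where x': "x' \<in> K" "f x = g x'"
      using eq by (metis imageE imageI)
    then have "x = x'"
      using assms \<open>x \<in> K\<close> by (metis subsetD)
    then show "x \<in> {x \<in> S. f x = g x}"
      using x' assms(3) by auto
  qed
next
  assume "K \<subseteq> {x \<in> S. f x = g x}"
  then show "f ` K = g ` K"
    by (intro image_cong) auto
qed

lemma is_equalizer_CH_imp:
  assumes "is_equalizer_CH TYPE('z) E X f g h"
  shows "CH E \<and> continuous_map E X h \<and> inj_on h (topspace E) \<and>
         h ` topspace E = {x \<in> topspace X. f x = g x}"
proof -
  \<comment> \<open>Test the universal property against the one-point space.\<close>
  define P :: "'z topology" where "P = discrete_topology {undefined}"
  have P: "CH P" "topspace P = {undefined}"
    by (simp_all add: P_def CH_def compact_space_discrete_topology Hausdorff_space_discrete_topology)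
  have E: "CH E" and hc: "continuous_map E X h" and heq: "\<forall>e\<in>topspace E. f (h e) = g (h e)"
    using assms unfolding is_equalizer_CH_def by blast+
  have univ: "(\<exists>u. continuous_map P E u \<and> h (u undefined) = x) \<and>
      (\<forall>u u'. continuous_map P E u \<and> continuous_map P E u' \<and> h (u undefined) = x \<and> h (u' undefined) = x
         \<longrightarrow> u undefined = u' undefined)"
    if "x \<in> topspace X" "f x = g x" for x
    using assms[unfolded is_equalizer_CH_def, THEN conjunct2, THEN conjunct2, THEN conjunct2,
        rule_format, of P "\<lambda>_. x"] P that
    by simp
  have "{x \<in> topspace X. f x = g x} \<subseteq> h ` topspace E"
  proof (intro subsetI, elim CollectE conjE)
    fix x assume x: "x \<in> topspace X" "f x = g x"
    obtain u where "continuous_map P E u" "h (u undefined) = x"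
      using univ[OF x] by blast
    moreover have "u undefined \<in> topspace E"
      using continuous_map_image_subset_topspace[OF \<open>continuous_map P E u\<close>] P(2) by blast
    ultimately show "x \<in> h ` topspace E"
      by blast
  qed
  moreover have "h ` topspace E \<subseteq> {x \<in> topspace X. f x = g x}"
    using heq continuous_map_image_subset_topspace[OF hc] by auto
  moreover have "inj_on h (topspace E)"
  proof (rule inj_onI)
    fix e e' assume e: "e \<in> topspace E" "e' \<in> topspace E" "h e = h e'"
    have "h e \<in> topspace X"
      using e(1) continuous_map_image_subset_topspace[OF hc] by blast
    with heq e(1) have "\<forall>u u'. continuous_map P E u \<and> continuous_map P E u' \<and>
        h (u undefined) = h e \<and> h (u' undefined) = h e \<longrightarrow> u undefined = u' undefined"
      using univ by blast
    from this[rule_format, of "\<lambda>_. e" "\<lambda>_. e'"] show "e = e'"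
      using e by (simp add: continuous_map_const)
  qed
  ultimately show ?thesis
    using E hc by blast
qed

lemma is_equalizer_CH_if_injective:
  assumes "CH E" "Hausdorff_space X" "continuous_map E X h" "inj_on h (topspace E)"
    and img: "h ` topspace E = {x \<in> topspace X. f x = g x}"
  shows "is_equalizer_CH TYPE('z) E X f g h"
  unfolding is_equalizer_CH_def
proof (intro conjI allI impI)
  show "CH E" "continuous_map E X h" "\<forall>e\<in>topspace E. f (h e) = g (h e)"
    using assms by auto
  fix Z :: "'z topology" and z
  assume "CH Z \<and> continuous_map Z X z \<and> (\<forall>t\<in>topspace Z. f (z t) = g (z t))"
  then have "continuous_map Z (subtopology X (h ` topspace E)) z"
    using continuous_map_image_subset_topspace[of Z X z] by (auto simp: img continuous_map_in_subtopology)
  moreover have "continuous_map (subtopology X (h ` topspace E)) E (inv_into (topspace E) h)"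
    using assms by (intro continuous_inverse_map) (auto simp: CH_def)
  ultimately have "continuous_map Z E (inv_into (topspace E) h \<circ> z)"
    by (rule continuous_map_compose)
  moreover have "\<forall>t\<in>topspace Z. h ((inv_into (topspace E) h \<circ> z) t) = z t"
    using \<open>continuous_map Z (subtopology X _) z\<close>
    by (auto simp: continuous_map_in_subtopology Pi_iff f_inv_into_f)
  ultimately show "\<exists>u. continuous_map Z E u \<and> (\<forall>t\<in>topspace Z. h (u t) = z t)"
    by blast
  fix u u'
  assume "continuous_map Z E u \<and> continuous_map Z E u' \<and>
    (\<forall>t\<in>topspace Z. h (u t) = z t) \<and> (\<forall>t\<in>topspace Z. h (u' t) = z t)"
  then have u: "u ` topspace Z \<subseteq> topspace E" "u' ` topspace Z \<subseteq> topspace E"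
    and hu: "\<forall>t\<in>topspace Z. h (u t) = h (u' t)"
    using continuous_map_image_subset_topspace[of Z E u] continuous_map_image_subset_topspace[of Z E u']
    by simp_all
  show "\<forall>t\<in>topspace Z. u t = u' t"
  proof
    fix t assume "t \<in> topspace Z"
    then show "u t = u' t"
      using u hu by (intro inj_onD[OF assms(4)]) auto
  qed
qed

lemma is_equalizer_CH_iff:
  assumes "Hausdorff_space X"
  shows "is_equalizer_CH TYPE('z) E X f g h \<longleftrightarrow>
         CH E \<and> continuous_map E X h \<and> inj_on h (topspace E) \<and>
         h ` topspace E = {x \<in> topspace X. f x = g x}"
  using assms is_equalizer_CH_imp[of E X f g h] is_equalizer_CH_if_injective[of E X h f g] by blast

theorem proposition2p6:
  fixes X :: "'x topology" and Y :: "'y topology" and E :: "'e topology"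
    and f g :: "'x \<Rightarrow> 'y" and k :: "'y \<Rightarrow> 'x" and h :: "'e \<Rightarrow> 'x"
  assumes "CH X" and "CH Y"
    and "continuous_map X Y f" and "continuous_map X Y g"
    and "continuous_map Y X k"
    and "\<forall>x\<in>topspace X. k (f x) = x" and "\<forall>x\<in>topspace X. k (g x) = x"
    and "is_equalizer_CH TYPE('z) E X f g h"
  shows "is_equalizer_CH TYPE('w) (vietoris E) (vietoris X) (vmap f) (vmap g) (vmap h)"
proof -
  have X: "compact_space X" "Hausdorff_space X"
    using \<open>CH X\<close> by (auto simp: CH_def)
  have E: "CH E" and hc: "continuous_map E X h" and hinj: "inj_on h (topspace E)"
    and himg: "h ` topspace E = {x \<in> topspace X. f x = g x}"
    using is_equalizer_CH_iff[OF X(2), THEN iffD1, OF assms(8)] by blast+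
  have hclosed: "closed_map E X h"
    using E X(2) hc by (intro continuous_imp_closed_map) (auto simp: CH_def)
  have "vmap f K = vmap g K \<longleftrightarrow> K \<subseteq> h ` topspace E" if "closedin X K" for K
    unfolding himg vmap_def
    by (rule image_eq_iff_subset_equalizer_if_common_retraction[where k=k, OF assms(6,7) closedin_subset[OF that]])
  then have "{K \<in> topspace (vietoris X). vmap f K = vmap g K} = {K. closedin X K \<and> K \<subseteq> h ` topspace E}"
    by (auto simp: topspace_vietoris)
  then have "vmap h ` topspace (vietoris E) = {K \<in> topspace (vietoris X). vmap f K = vmap g K}"
    using vmap_image_topspace_vietoris[OF hc hclosed] by simp
  then show ?thesis
    unfolding is_equalizer_CH_iff[OF Hausdorff_space_vietoris[OF X]]
    using CH_vietoris[OF E] continuous_map_vmap[OF hc hclosed] inj_on_vmap[OF hinj]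
    by (intro conjI) assumption+
qed

end
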